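(* Let $H$ be a finite index subgroup of $F_2$ which contains an element of odd length, and let $y\in F_2$. Then there is an $N\in\mathbb{N}$ such that the constants $a_{i,xH}$ satisfy $a_{i,xH}=0$ for every $xH\in F_2/H$ and every $i\geq N$.
   Context: $F_2$ is the free group on $a,b$, $\Xi=\{a,b,a^{-1},b^{-1}\}$, and the length of an element is the length of its reduced word in $\Xi$. Sets $\Omega_{k,xH}\subseteq\Xi$ for $k\geq -1$, $xH\in F_2/H$ are defined recursively: $\Omega_{-1,xH}=\varnothing$ for all $xH$; $\Omega_{0,yH}=\Xi$ and $\Omega_{0,xH}=\varnothing$ for $xH\neq yH$; and for $k\geq 0$, $\Omega_{k+1,zH}=\{h\in\Xi:\Omega_{k-1,zH}=\varnothing\text{ and }\Omega_{k,h^{-1}zH}\neq\varnothing\}$. For $i\geq 1$, $a_{i,xH}=|\Omega_{i,xH}|-1$ if $\Omega_{i,xH}\neq\varnothing$ and $a_{i,xH}=0$ otherwise. (These are the constants for which $|yH\cap S_n|=\sum_{i=1}^{n-1}\sum_{xH}a_{i,xH}|xH\cap S_{n-i}|$ for $n\geq2$, where $S_n$ is the set of elements of length $n$.) *)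

theory Defs
  imports "HOL-Algebra.Coset"
begin

text \<open>The free group F_2 on a, b, realised as reduced words over the
alphabet Xi = {a, b, a^-1, b^-1}. A letter is a pair (generator, sign),
sign True meaning the positive generator.\<close>

datatype gen = GA | GB

type_synonym letter = "gen \<times> bool"

definition inv_letter :: "letter \<Rightarrow> letter" where
  "inv_letter x = (fst x, \<not> snd x)"

definition reduced :: "letter list \<Rightarrow> bool" where
  "reduced w \<longleftrightarrow> (\<forall>i. Suc i < length w \<longrightarrow> w ! Suc i \<noteq> inv_letter (w ! i))"

fun red :: "letter list \<Rightarrow> letter list" where
  "red [] = []"
| "red (x # xs) = (case red xs of
      [] \<Rightarrow> [x]
    | y # ys \<Rightarrow> (if y = inv_letter x then ys else x # y # ys))"

definition F2 :: "letter list monoid" where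
  "F2 = \<lparr>carrier = {w. reduced w}, mult = (\<lambda>u v. red (u @ v)), one = []\<rparr>"

definition wlen :: "letter list \<Rightarrow> nat" where
  "wlen w = length w"

definition lcosets_F2 :: "letter list set \<Rightarrow> letter list set set" where
  "lcosets_F2 H = {x <#\<^bsub>F2\<^esub> H | x. x \<in> carrier F2}"

text \<open>Om H y n C is Omega_{n-1, C}; so Om H y 0 C = Omega_{-1,C} = {}.
The letter h, as a group element, is the one-letter word [h]; h^-1 zH is
the left coset [inv_letter h] <# zH.\<close>
fun Om :: "letter list set \<Rightarrow> letter list \<Rightarrow> nat \<Rightarrow> letter list set \<Rightarrow> letter set" where
  "Om H y 0 C = {}"
| "Om H y (Suc 0) C = (if C = y <#\<^bsub>F2\<^esub> H then UNIV else {})"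
| "Om H y (Suc (Suc n)) C =
     {h. Om H y n C = {} \<and> Om H y (Suc n) ([inv_letter h] <#\<^bsub>F2\<^esub> C) \<noteq> {}}"

definition Omega :: "letter list set \<Rightarrow> letter list \<Rightarrow> nat \<Rightarrow> letter list set \<Rightarrow> letter set" where
  "Omega H y k C = Om H y (Suc k) C"

definition a_const :: "letter list set \<Rightarrow> letter list \<Rightarrow> nat \<Rightarrow> letter list set \<Rightarrow> nat" where
  "a_const H y i C = (if Omega H y i C \<noteq> {} then card (Omega H y i C) - 1 else 0)"

end

theory Submission
  imports Defs
begin

(* By induction on k, Omega_{k,C} is nonempty exactly when the coset C is reached
   from yH by k left multiplications with letters but not by k - 2 of them.  Since
   h^-1 h cancels, the sets R_k of cosets reachable in k steps satisfy
   R_k \<subseteq> R_{k+2}; inside the finite set F_2/H both parity classes of this chain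
   stabilise, and from then on every Omega_{k,C} is empty. *)

lemma mono_chain_stabilizes:
  fixes E :: "nat \<Rightarrow> 'a set"
  assumes "mono E" and bounded: "\<And>n. E n \<subseteq> S" and "finite S"
  shows "\<exists>N. \<forall>n\<ge>N. E n = E N"
proof -
  have "range (\<lambda>n. card (E n)) \<subseteq> {..card S}"
    using bounded \<open>finite S\<close> by (auto intro: card_mono)
  then have "finite (range (\<lambda>n. card (E n)))"
    using finite_subset by blast
  then have "Max (range (\<lambda>n. card (E n))) \<in> range (\<lambda>n. card (E n))"
    by (rule Max_in) simp
  then obtain N where N: "card (E N) = Max (range (\<lambda>n. card (E n)))"
    by (metis rangeE)
  have "E n = E N" if "N \<le> n" for n
  proof (rule card_subset_eq[symmetric])
    show "finite (E n)" using bounded \<open>finite S\<close> by (rule finite_subset)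
    show "E N \<subseteq> E n" using \<open>mono E\<close> that by (rule monoD)
    have "card (E n) \<le> card (E N)"
      unfolding N using \<open>finite (range _)\<close> by (rule Max_ge) simp
    then show "card (E N) = card (E n)"
      using card_mono[OF \<open>finite (E n)\<close> \<open>E N \<subseteq> E n\<close>] by simp
  qed
  then show ?thesis by blast
qed

lemma two_step_chain_stabilizes:
  fixes E :: "nat \<Rightarrow> 'a set"
  assumes step: "\<And>n. E n \<subseteq> E (Suc (Suc n))" and bounded: "\<And>n. E n \<subseteq> S" and "finite S"
  shows "\<exists>N. \<forall>n\<ge>N. E (Suc (Suc n)) = E n"
proof -
  have "\<exists>N. \<forall>j\<ge>N. E (2 * j + r) = E (2 * N + r)" for r
  proof (rule mono_chain_stabilizes)
    show "mono (\<lambda>j. E (2 * j + r))"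
      unfolding mono_iff_le_Suc using step by simp
    show "E (2 * j + r) \<subseteq> S" for j by (rule bounded)
  qed (rule \<open>finite S\<close>)
  then obtain N where N: "\<And>r j. N r \<le> j \<Longrightarrow> E (2 * j + r) = E (2 * N r + r)"
    by (metis (no_types))
  have "E (Suc (Suc n)) = E n" if "2 * (N 0 + N 1) \<le> n" for n
  proof -
    define j r where "j = n div 2" and "r = n mod 2"
    have n: "n = 2 * j + r" and "r = 0 \<or> r = 1" by (auto simp: j_def r_def)
    then have "N r \<le> j" using that by auto
    then have "E (2 * Suc j + r) = E (2 * j + r)" using N[of r j] N[of r "Suc j"] by simp
    then show ?thesis using n by simp
  qed
  then show ?thesis by blast
qed

lemma inv_letter_inv_letter [simp]: "inv_letter (inv_letter x) = x"
  by (simp add: inv_letter_def)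

lemma reduced_Nil [simp]: "reduced []"
  and reduced_singleton [simp]: "reduced [x]"
  by (auto simp: reduced_def)

lemma reduced_Cons_Cons [simp]:
  "reduced (x # y # ys) \<longleftrightarrow> y \<noteq> inv_letter x \<and> reduced (y # ys)"
  unfolding reduced_def by (auto simp: less_Suc_eq_0_disj nth_Cons split: nat.splits)

lemma reduced_ConsD: "reduced (x # xs) \<Longrightarrow> reduced xs"
  by (cases xs) auto

lemma reduced_red: "reduced (red w)"
  by (induction w) (auto split: list.splits dest: reduced_ConsD)

lemma red_reduced: "reduced w \<Longrightarrow> red w = w"
proof (induction w)
  case (Cons x xs)
  then show ?case by (cases xs) (auto dest: reduced_ConsD)
qed simp

lemma red_red [simp]: "red (red w) = red w"
  by (simp add: red_reduced reduced_red)

lemma red_Cons_inv_letter: "red (x # inv_letter x # w) = red w"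
proof (cases "red w")
  case (Cons y ys)
  then have "red (y # ys) = y # ys" "red ys = ys"
    using reduced_red[of w] by (metis red_reduced reduced_ConsD)+
  then show ?thesis using Cons reduced_red[of w] by auto
qed simp

lemma red_append_red_right: "red (u @ red v) = red (u @ v)"
  by (induction u) auto

lemma red_red_Cons_append: "red (red (x # u) @ v) = red (x # red u @ v)"
proof (cases "red u")
  case (Cons y ys)
  then show ?thesis
    using red_Cons_inv_letter[of x "ys @ v"] by (cases "y = inv_letter x") auto
qed simp

lemma red_append_red_left: "red (red u @ v) = red (u @ v)"
proof (induction u)
  case (Cons x u)
  have "red (x # red u @ v) = red (x # red (red u @ v))"
    using red_append_red_right[of "[x]"] by simp
  also have "\<dots> = red ((x # u) @ v)"
    using red_append_red_right[of "[x]" "u @ v"] by (simp add: Cons.IH)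
  finally show ?case by (simp only: red_red_Cons_append)
qed simp

declare red.simps(2) [simp del]

lemma l_coset_F2_eq: "x <#\<^bsub>F2\<^esub> C = (\<lambda>c. red (x @ c)) ` C"
  by (auto simp: l_coset_def F2_def)

lemma l_coset_F2_subset_carrier: "x <#\<^bsub>F2\<^esub> C \<subseteq> carrier F2"
  unfolding l_coset_F2_eq by (auto simp: F2_def reduced_red)

lemma lcosets_F2_subset_carrier: "C \<in> lcosets_F2 H \<Longrightarrow> C \<subseteq> carrier F2"
  by (auto simp: lcosets_F2_def l_coset_F2_subset_carrier[THEN subsetD])

definition lmult :: "letter \<Rightarrow> letter list set \<Rightarrow> letter list set" where
  "lmult l C = [l] <#\<^bsub>F2\<^esub> C"

lemma lmult_subset_carrier: "lmult l C \<subseteq> carrier F2"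
  by (simp add: lmult_def l_coset_F2_subset_carrier)

lemma lmult_inv_letter_lmult:
  assumes "C \<subseteq> carrier F2"
  shows "lmult (inv_letter l) (lmult l C) = C"
proof -
  have "red (inv_letter l # red (l # c)) = c" if "c \<in> C" for c
  proof -
    have "red (inv_letter l # red (l # c)) = red (inv_letter l # l # c)"
      using red_append_red_right[of "[inv_letter l]" "l # c"] by simp
    also have "\<dots> = c"
      using red_Cons_inv_letter[of "inv_letter l" c] assms that
      by (simp add: F2_def red_reduced subset_iff)
    finally show ?thesis .
  qed
  then show ?thesis by (force simp: lmult_def l_coset_F2_eq image_comp)
qed

lemma lmult_l_coset: "lmult l (x <#\<^bsub>F2\<^esub> H) = red (l # x) <#\<^bsub>F2\<^esub> H"
proof -
  have "red (l # red (x @ h)) = red (red (l # x) @ h)" for h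
    using red_append_red_right[of "[l]" "x @ h"] red_append_red_left[of "l # x" h] by simp
  then show ?thesis by (simp add: lmult_def l_coset_F2_eq image_comp)
qed

fun reach :: "letter list set \<Rightarrow> letter list \<Rightarrow> nat \<Rightarrow> letter list set set" where
  "reach H y 0 = {y <#\<^bsub>F2\<^esub> H}"
| "reach H y (Suc n) = {lmult l C | l C. C \<in> reach H y n}"

lemma lmult_in_reach_Suc: "C \<in> reach H y n \<Longrightarrow> lmult l C \<in> reach H y (Suc n)"
  unfolding reach.simps by blast

lemma reach_subset_carrier: "C \<in> reach H y n \<Longrightarrow> C \<subseteq> carrier F2"
  by (cases n) (auto simp: l_coset_F2_subset_carrier intro: lmult_subset_carrier[THEN subsetD])

lemma reach_Suc_iff:
  assumes "C \<subseteq> carrier F2"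
  shows "C \<in> reach H y (Suc n) \<longleftrightarrow> (\<exists>l. lmult l C \<in> reach H y n)"
proof
  assume "C \<in> reach H y (Suc n)"
  then obtain l D where "C = lmult l D" "D \<in> reach H y n" by auto
  then show "\<exists>l. lmult l C \<in> reach H y n"
    using lmult_inv_letter_lmult[OF reach_subset_carrier] by metis
next
  assume "\<exists>l. lmult l C \<in> reach H y n"
  then show "C \<in> reach H y (Suc n)"
    using lmult_in_reach_Suc lmult_inv_letter_lmult[OF assms] inv_letter_inv_letter by metis
qed

lemma reach_subset_reach_Suc_Suc: "reach H y n \<subseteq> reach H y (Suc (Suc n))"
  using lmult_inv_letter_lmult[OF reach_subset_carrier] lmult_in_reach_Suc by (metis subsetI)

lemma reach_subset_lcosets_F2:
  assumes "y \<in> carrier F2"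
  shows "reach H y n \<subseteq> lcosets_F2 H"
proof (induction n)
  case 0
  then show ?case using assms by (auto simp: lcosets_F2_def)
next
  case (Suc n)
  have "lmult l C \<in> lcosets_F2 H" if "C \<in> lcosets_F2 H" for l C
  proof -
    from that obtain x where "C = x <#\<^bsub>F2\<^esub> H" by (auto simp: lcosets_F2_def)
    moreover have "red (l # x) \<in> carrier F2" by (simp add: F2_def reduced_red)
    ultimately show ?thesis by (auto simp: lcosets_F2_def lmult_l_coset)
  qed
  with Suc show ?case by auto
qed

declare reach.simps(2) [simp del]

lemma Omega_0_nonempty_iff: "Omega H y 0 C \<noteq> {} \<longleftrightarrow> C = y <#\<^bsub>F2\<^esub> H"
  by (simp add: Omega_def)

lemma ex_inv_letter_iff: "(\<exists>h. P (inv_letter h)) \<longleftrightarrow> (\<exists>l. P l)"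
  by (metis inv_letter_inv_letter)

lemma Omega_Suc_Suc:
  "Omega H y (Suc (Suc k)) C =
     {h. Omega H y k C = {} \<and> Omega H y (Suc k) (lmult (inv_letter h) C) \<noteq> {}}"
  by (simp add: Omega_def lmult_def)

lemma Omega_Suc_Suc_nonempty_iff:
  "Omega H y (Suc (Suc k)) C \<noteq> {} \<longleftrightarrow>
     Omega H y k C = {} \<and> (\<exists>l. Omega H y (Suc k) (lmult l C) \<noteq> {})"
  unfolding Omega_Suc_Suc
  using ex_inv_letter_iff[where P = "\<lambda>l. Omega H y (Suc k) (lmult l C) \<noteq> {}"] by blast

lemma Omega_1_nonempty_iff:
  "Omega H y (Suc 0) C \<noteq> {} \<longleftrightarrow> (\<exists>l. Omega H y 0 (lmult l C) \<noteq> {})"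
  using ex_inv_letter_iff[where P = "\<lambda>l. Omega H y 0 (lmult l C) \<noteq> {}"]
  by (simp add: Omega_def lmult_def)

lemma Omega_nonempty_iff:
  assumes "C \<subseteq> carrier F2"
  shows "Omega H y k C \<noteq> {} \<longleftrightarrow>
    C \<in> reach H y k \<and> (2 \<le> k \<longrightarrow> C \<notin> reach H y (k - 2))"
  using assms
proof (induction k arbitrary: C rule: induct_nat_012)
  case 0
  then show ?case by (simp add: Omega_0_nonempty_iff)
next
  case 1
  then show ?case by (simp add: Omega_1_nonempty_iff Omega_0_nonempty_iff reach_Suc_iff)
next
  case (ge2 k)
  have reach_k_iff: "C \<in> reach H y k \<longleftrightarrow> (\<exists>l. lmult l C \<in> reach H y (k - 1))" if "1 \<le> k"
    using reach_Suc_iff[OF ge2.prems, of H y "k - 1"] that by simp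
  show ?case
  proof
    assume "Omega H y (Suc (Suc k)) C \<noteq> {}"
    then obtain l
      where C_old: "Omega H y k C = {}" and D: "Omega H y (Suc k) (lmult l C) \<noteq> {}"
      by (auto simp: Omega_Suc_Suc_nonempty_iff)
    have D_new: "lmult l C \<in> reach H y (Suc k)" "1 \<le> k \<Longrightarrow> lmult l C \<notin> reach H y (k - 1)"
      using D ge2.IH(2)[OF lmult_subset_carrier] by auto
    have "C \<notin> reach H y k"
    proof
      assume "C \<in> reach H y k"
      with C_old ge2.IH(1)[OF ge2.prems] have "2 \<le> k" "C \<in> reach H y (k - 2)" by auto
      then show False
        using D_new(2) lmult_in_reach_Suc[of C H y "k - 2" l]
        by (simp add: Suc_diff_Suc numeral_2_eq_2)
    qed
    moreover have "C \<in> reach H y (Suc (Suc k))"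
      using D_new(1) reach_Suc_iff[OF ge2.prems] by blast
    ultimately show "C \<in> reach H y (Suc (Suc k)) \<and>
        (2 \<le> Suc (Suc k) \<longrightarrow> C \<notin> reach H y (Suc (Suc k) - 2))"
      by simp
  next
    assume "C \<in> reach H y (Suc (Suc k)) \<and>
      (2 \<le> Suc (Suc k) \<longrightarrow> C \<notin> reach H y (Suc (Suc k) - 2))"
    then obtain l where D: "lmult l C \<in> reach H y (Suc k)" and C_new: "C \<notin> reach H y k"
      using reach_Suc_iff[OF ge2.prems] by auto
    have "1 \<le> k \<Longrightarrow> lmult l C \<notin> reach H y (k - 1)"
      using C_new reach_k_iff by blast
    then have "Omega H y (Suc k) (lmult l C) \<noteq> {}"
      using D ge2.IH(2)[OF lmult_subset_carrier] by auto
    moreover have "Omega H y k C = {}"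
      using C_new ge2.IH(1)[OF ge2.prems] by blast
    ultimately show "Omega H y (Suc (Suc k)) C \<noteq> {}"
      unfolding Omega_Suc_Suc_nonempty_iff by blast
  qed
qed

theorem theorem5p1:
  fixes H :: "letter list set" and y :: "letter list"
  assumes "subgroup H F2"
    and "finite (lcosets_F2 H)"
    and "\<exists>w\<in>H. odd (wlen w)"
    and "y \<in> carrier F2"
  shows "\<exists>N::nat. \<forall>C\<in>lcosets_F2 H. \<forall>i\<ge>N. a_const H y i C = 0"
proof -
  obtain N where N: "\<And>n. N \<le> n \<Longrightarrow> reach H y (Suc (Suc n)) = reach H y n"
    using two_step_chain_stabilizes[of "reach H y" "lcosets_F2 H"]
      reach_subset_reach_Suc_Suc reach_subset_lcosets_F2[OF assms(4)] assms(2)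
    by blast
  have "Omega H y i C = {}" if C: "C \<in> lcosets_F2 H" and i: "Suc (Suc N) \<le> i" for C i
  proof -
    obtain n where "i = Suc (Suc n)" "N \<le> n"
      using i by (metis Suc_le_D Suc_le_mono)
    then show ?thesis
      using Omega_nonempty_iff[OF lcosets_F2_subset_carrier[OF C], of H y i] N[of n] by simp
  qed
  then show ?thesis by (auto simp: a_const_def)
qed

end
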